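(* Let $n\ge3$, $\Omega\subset\mathbb R^n$ a bounded convex domain, $M>0$ and $0\le\gamma<n-2$. Let $u\in C(\overline\Omega)$ be convex with $u=0$ on $\partial\Omega$ and $\det D^2u\le M\operatorname{dist}^\gamma(\cdot,\partial\Omega)$ in $\Omega$ in the sense of Aleksandrov. Then $$|u(x)|\le C(n,M,\gamma,\Omega)\operatorname{dist}^{\frac{2+\gamma}{n}}(x,\partial\Omega)\quad\text{for all }x\in\Omega.$$
   Context: For a convex function $u$ on $\Omega$, its Monge–Ampère measure is $Mu(E)=|\partial u(E)|$ for Borel $E\subset\Omega$, where $\partial u(x)=\{p: u(y)\ge u(x)+p\cdot(y-x)\ \forall y\in\Omega\}$. $\det D^2u\le g$ in the sense of Aleksandrov means $Mu\le g\,dx$ as Borel measures. *)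

theory Defs
  imports "HOL-Analysis.Analysis"
begin

definition subdiff :: "('a::euclidean_space \<Rightarrow> real) \<Rightarrow> 'a set \<Rightarrow> 'a \<Rightarrow> 'a set" where
  "subdiff u \<Omega> x = {p. \<forall>y\<in>\<Omega>. u y \<ge> u x + p \<bullet> (y - x)}"

definition outer_lebesgue :: "'a::euclidean_space set \<Rightarrow> ennreal" where
  "outer_lebesgue S = (INF T \<in> {T \<in> sets lebesgue. S \<subseteq> T}. emeasure lebesgue T)"

definition monge_ampere :: "('a::euclidean_space \<Rightarrow> real) \<Rightarrow> 'a set \<Rightarrow> 'a set \<Rightarrow> ennreal" where
  "monge_ampere u \<Omega> E = outer_lebesgue (\<Union>x\<in>E. subdiff u \<Omega> x)"

definition aleksandrov_det_le :: "('a::euclidean_space \<Rightarrow> real) \<Rightarrow> 'a set \<Rightarrow> ('a \<Rightarrow> real) \<Rightarrow> bool" where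
  "aleksandrov_det_le u \<Omega> g \<longleftrightarrow>
     (\<forall>E \<in> sets borel. E \<subseteq> \<Omega> \<longrightarrow>
        monge_ampere u \<Omega> E \<le> (\<integral>\<^sup>+ x \<in> E. ennreal (g x) \<partial>lebesgue))"

end

theory Submission
  imports Defs
begin

text \<open>
  Since \<open>u \<le> 0\<close>, fix \<open>x0\<close> of height \<open>h = - u x0 > 0\<close>, a nearest boundary point \<open>z\<close> and the
  inner unit normal \<open>\<nu>\<close> of a supporting hyperplane at \<open>z\<close>; then
  \<open>d = \<nu> \<bullet> (x0 - z) \<le> infdist x0 (frontier \<Omega>)\<close>. Each slope \<open>p = w - c \<nu>\<close> with
  \<open>norm w < h / (2 R)\<close> (\<open>R\<close> bounding the diameter) and \<open>h / (4 d) \<le> c \<le> h / (2 d)\<close> is the slope of an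
  affine function that meets \<open>u\<close> at \<open>x0\<close> and stays strictly below \<open>u\<close> on the boundary, so \<open>u\<close>
  minus it is minimal at an interior point \<open>x1\<close>, where \<open>p\<close> is a subgradient and \<open>h / (4 d) * \<nu> \<bullet> (x1 - z) \<le> h / 2 - u x1\<close>. If already
  \<open>\<bar>u\<bar> \<le> A * (dist + \<delta>) powr a\<close>, where \<open>a = (2 + \<gamma>) / n < 1\<close>, this confines \<open>x1\<close> to a slab
  \<open>E = {\<nu> \<bullet> (y - z) < T}\<close> of controlled width \<open>T\<close>. Hence about \<open>R / d\<close> disjoint balls of
  slopes, of radius \<open>h / (2 R)\<close>, lie in the subgradient image of \<open>E\<close>, and the Aleksandrov bound
  \<open>M * T powr \<gamma> * |E|\<close> on its measure yields \<open>h ^ n \<le> K * d * T powr (1 + \<gamma>)\<close>. Solving for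
  \<open>h\<close> improves the bound to \<open>max C1 (C2 * A powr \<theta>) * (dist + \<delta>) powr a\<close> with \<open>\<theta> < 1\<close>; for
  the best \<open>A\<close>, finite thanks to \<open>\<delta> > 0\<close>, this forces \<open>A \<le> C\<close> independently of \<open>\<delta>\<close>, and
  letting \<open>\<delta> \<rightarrow> 0\<close> concludes.
\<close>

section \<open>Convex functions and supporting hyperplanes\<close>

lemma convex_on_closure:
  fixes u :: "'a::euclidean_space \<Rightarrow> real"
  assumes cvx: "convex \<Omega>" and cu: "convex_on \<Omega> u" and cont: "continuous_on (closure \<Omega>) u"
  shows "convex_on (closure \<Omega>) u"
proof (rule convex_onI)
  show "convex (closure \<Omega>)" using cvx by (rule convex_closure)
  fix t :: real and x y assume t: "0 < t" "t < 1" and x: "x \<in> closure \<Omega>" and y: "y \<in> closure \<Omega>"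
  obtain xs where xs: "\<And>n. xs n \<in> \<Omega>" "xs \<longlonglongrightarrow> x" using x closure_sequential by metis
  obtain ys where ys: "\<And>n. ys n \<in> \<Omega>" "ys \<longlonglongrightarrow> y" using y closure_sequential by metis
  have lim: "(\<lambda>n. u (f n)) \<longlonglongrightarrow> u l" if "\<And>n. f n \<in> \<Omega>" "f \<longlonglongrightarrow> l" "l \<in> closure \<Omega>" for f l
  proof -
    have "\<forall>n. f n \<in> closure \<Omega>" using that(1) closure_subset by blast
    then show ?thesis using cont that(2,3) unfolding continuous_on_sequentially comp_def by blast
  qed
  have "(\<lambda>n. u ((1 - t) *\<^sub>R xs n + t *\<^sub>R ys n)) \<longlonglongrightarrow> u ((1 - t) *\<^sub>R x + t *\<^sub>R y)"
    using t by (intro lim convexD[OF cvx] xs ys tendsto_intros convexD[OF convex_closure[OF cvx]] x y) auto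
  moreover have "(\<lambda>n. (1 - t) * u (xs n) + t * u (ys n)) \<longlonglongrightarrow> (1 - t) * u x + t * u y"
    by (intro tendsto_intros lim xs ys x y)
  moreover have "u ((1 - t) *\<^sub>R xs n + t *\<^sub>R ys n) \<le> (1 - t) * u (xs n) + t * u (ys n)" for n
    using cu xs(1) ys(1) t unfolding convex_on_def by auto
  ultimately show "u ((1 - t) *\<^sub>R x + t *\<^sub>R y) \<le> (1 - t) * u x + t * u y"
    by (auto intro: LIMSEQ_le)
qed

lemma convex_on_nonpos_if_frontier_zero:
  fixes \<Omega> :: "'a::euclidean_space set" and u :: "'a \<Rightarrow> real"
  assumes "open \<Omega>" "convex \<Omega>" "bounded \<Omega>" "convex_on \<Omega> u" "continuous_on (closure \<Omega>) u"
    and zero: "\<forall>x\<in>frontier \<Omega>. u x = 0" and x: "x \<in> \<Omega>" and z: "z \<in> frontier \<Omega>"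
  shows "u x \<le> 0"
proof -
  have cc: "convex_on (closure \<Omega>) u" using convex_on_closure assms(2,4,5) by blast
  have "x \<noteq> z" using assms(1) x z by (auto simp: frontier_def interior_open)
  moreover have "x \<in> rel_interior \<Omega>" "x + (x - z) \<in> affine hull \<Omega>"
    using assms(1) x affine_hull_open by (auto simp: rel_interior_open)
  ultimately obtain e where e: "0 < e" "x + e *\<^sub>R (x - z) \<in> rel_frontier \<Omega>"
    using ray_to_rel_frontier[OF assms(3)] by (metis right_minus_eq)
  define w where "w = x + e *\<^sub>R (x - z)"
  define t where "t = e / (1 + e)"
  have w: "w \<in> frontier \<Omega>"
    using e(2) assms(1) by (simp add: w_def rel_frontier_def frontier_def rel_interior_open interior_open)
  have "1 - t = 1 / (1 + e)" using e(1) by (simp add: t_def field_simps)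
  moreover have "t = 1 / (1 + e) * e" by (simp add: t_def)
  ultimately have "(1 - t) *\<^sub>R w + t *\<^sub>R z = (1 / (1 + e)) *\<^sub>R (w + e *\<^sub>R z)"
    by (simp only: scaleR_scaleR[symmetric] scaleR_add_right)
  also have "w + e *\<^sub>R z = (1 + e) *\<^sub>R x" by (simp add: w_def algebra_simps)
  finally have "x = (1 - t) *\<^sub>R w + t *\<^sub>R z" using e(1) by simp
  moreover have "0 \<le> t" "t \<le> 1" using e(1) by (auto simp: t_def)
  moreover have "w \<in> closure \<Omega>" "z \<in> closure \<Omega>" using w z by (auto simp: frontier_def)
  ultimately have "u x \<le> (1 - t) * u w + t * u z"
    using convex_onD[OF cc] by simp
  then show ?thesis using zero w z by simp
qed

lemma supporting_unit_normal:
  fixes \<Omega> :: "'a::euclidean_space set"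
  assumes "open \<Omega>" "convex \<Omega>" "z \<notin> \<Omega>"
  obtains \<nu> where "norm \<nu> = 1" "\<And>y. y \<in> \<Omega> \<Longrightarrow> 0 < \<nu> \<bullet> (y - z)"
proof -
  have "convex ((\<lambda>y. y - z) ` \<Omega>)" "0 \<notin> (\<lambda>y. y - z) ` \<Omega>"
    using assms(2,3) by (auto simp: convex_translation_subtract)
  then obtain a where a: "a \<noteq> 0" "\<And>y. y \<in> \<Omega> \<Longrightarrow> 0 \<le> a \<bullet> (y - z)"
    by (metis separating_hyperplane_set_0 image_eqI)
  define \<nu> where "\<nu> = a /\<^sub>R norm a"
  have \<nu>: "norm \<nu> = 1" using a(1) by (simp add: \<nu>_def)
  have ge: "0 \<le> \<nu> \<bullet> (y - z)" if "y \<in> \<Omega>" for y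
    using a(2)[OF that] by (simp add: \<nu>_def)
  show ?thesis
  proof (rule that[OF \<nu>])
    fix y assume y: "y \<in> \<Omega>"
    \<comment> \<open>since \<open>\<Omega>\<close> is open, the non-strict inequality also holds slightly below \<open>y\<close>\<close>
    obtain e where e: "e > 0" "ball y e \<subseteq> \<Omega>" using assms(1) y open_contains_ball by blast
    have "y - (e / 2) *\<^sub>R \<nu> \<in> ball y e" using e \<nu> by (simp add: dist_norm)
    then have "y - (e / 2) *\<^sub>R \<nu> \<in> \<Omega>" using e by blast
    then have "0 \<le> \<nu> \<bullet> (y - (e / 2) *\<^sub>R \<nu> - z)" by (rule ge)
    also have "\<dots> = \<nu> \<bullet> (y - z) - e / 2"
      using \<nu> by (simp add: norm_eq_1 algebra_simps)
    finally show "0 < \<nu> \<bullet> (y - z)" using e by linarith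
  qed
qed

lemma infdist_frontier_le_inner:
  fixes \<Omega> :: "'a::euclidean_space set"
  assumes "norm \<nu> = 1" "\<And>y. y \<in> \<Omega> \<Longrightarrow> 0 < \<nu> \<bullet> (y - z)" "y \<in> \<Omega>"
  shows "infdist y (frontier \<Omega>) \<le> \<nu> \<bullet> (y - z)"
proof -
  define w where "w = y - (\<nu> \<bullet> (y - z)) *\<^sub>R \<nu>"
  have "\<nu> \<bullet> (w - z) = 0"
    using assms(1) by (simp add: w_def algebra_simps dot_square_norm power2_eq_square)
  then have "w \<notin> \<Omega>" using assms(2) by force
  then have "closed_segment y w \<inter> frontier \<Omega> \<noteq> {}"
    by (intro connected_Int_frontier) (use assms(3) in auto)
  then obtain p where p: "p \<in> closed_segment y w" "p \<in> frontier \<Omega>" by blast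
  have "dist y p \<le> dist y w" using dist_in_closed_segment[OF p(1)] by (simp add: dist_commute)
  also have "dist y w = \<nu> \<bullet> (y - z)"
    using assms(1) assms(2)[OF assms(3)] by (simp add: w_def dist_norm)
  finally show ?thesis by (rule infdist_le2[OF p(2)])
qed

section \<open>Lebesgue measure of translates, balls and slabs\<close>

lemma emeasure_le_outer_lebesgue:
  assumes "S \<in> sets lebesgue" "S \<subseteq> U"
  shows "emeasure lebesgue S \<le> outer_lebesgue U"
  unfolding outer_lebesgue_def by (rule INF_greatest, rule emeasure_mono) (use assms in auto)

lemma disjoint_family_translates_strip:
  fixes S :: "'a::real_inner set"
  assumes strip: "\<And>y. y \<in> S \<Longrightarrow> a < w \<bullet> y \<and> w \<bullet> y < a + w \<bullet> w"
  shows "disjoint_family (\<lambda>k::nat. (+) (real k *\<^sub>R w) ` S)"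
  unfolding disjoint_family_on_def
proof (intro ballI impI)
  fix j k :: nat assume "j \<noteq> k"
  show "(+) (real j *\<^sub>R w) ` S \<inter> (+) (real k *\<^sub>R w) ` S = {}"
  proof (rule ccontr)
    assume "(+) (real j *\<^sub>R w) ` S \<inter> (+) (real k *\<^sub>R w) ` S \<noteq> {}"
    then obtain s t where st: "s \<in> S" "t \<in> S" "real j *\<^sub>R w + s = real k *\<^sub>R w + t" by auto
    then have "w \<bullet> (real j *\<^sub>R w + s) = w \<bullet> (real k *\<^sub>R w + t)" by simp
    then have eq: "(real j - real k) * (w \<bullet> w) = w \<bullet> t - w \<bullet> s" by (simp add: algebra_simps)
    have "\<bar>w \<bullet> t - w \<bullet> s\<bar> < w \<bullet> w" and ww: "0 < w \<bullet> w"
      using strip[OF st(1)] strip[OF st(2)] by (auto simp: abs_less_iff)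
    moreover have "\<bar>real j - real k\<bar> * (w \<bullet> w) = \<bar>w \<bullet> t - w \<bullet> s\<bar>"
      using ww by (simp add: eq[symmetric] abs_mult)
    ultimately have "\<bar>real j - real k\<bar> * (w \<bullet> w) < 1 * (w \<bullet> w)" by simp
    then have "\<bar>real j - real k\<bar> < 1" by (rule mult_right_less_imp_less) (use ww in simp)
    then show False using \<open>j \<noteq> k\<close> by linarith
  qed
qed

lemma emeasure_UN_translates_strip:
  fixes S :: "'a::euclidean_space set"
  assumes S: "S \<in> sets lebesgue"
    and strip: "\<And>y. y \<in> S \<Longrightarrow> a < w \<bullet> y \<and> w \<bullet> y < a + w \<bullet> w"
  shows "emeasure lebesgue (\<Union>k<N. (+) (real k *\<^sub>R w) ` S) = of_nat N * emeasure lebesgue S"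
proof -
  have translate: "emeasure lebesgue ((+) c ` S) = emeasure lebesgue S" for c :: 'a
    using emeasure_lebesgue_affine[of 1 c S] by (simp add: add.commute cong: image_cong_simp)
  have "emeasure lebesgue (\<Union>k<N. (+) (real k *\<^sub>R w) ` S)
      = (\<Sum>k<N. emeasure lebesgue ((+) (real k *\<^sub>R w) ` S))"
    using disjoint_family_translates_strip[OF strip] S
    by (intro sum_emeasure[symmetric]) (auto simp: lebesgue_sets_translation disjoint_family_on_def)
  then show ?thesis by (simp add: translate)
qed

lemma emeasure_UN_balls_on_line:
  fixes c v :: "'a::euclidean_space"
  assumes v: "norm v = 1" and r: "r > 0"
  shows "emeasure lebesgue (\<Union>k<N. ball (c + (2 * real k * r) *\<^sub>R v) r)
    = ennreal (real N * r ^ DIM('a) * unit_ball_vol DIM('a))"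
proof -
  define w where "w = (2 * r) *\<^sub>R v"
  have balls: "(\<Union>k<N. ball (c + (2 * real k * r) *\<^sub>R v) r) = (\<Union>k<N. (+) (real k *\<^sub>R w) ` ball c r)"
    by (simp add: w_def mult_ac)
  have strip: "w \<bullet> c - 2 * r\<^sup>2 < w \<bullet> y \<and> w \<bullet> y < w \<bullet> c - 2 * r\<^sup>2 + w \<bullet> w" if "y \<in> ball c r" for y
  proof -
    have "\<bar>v \<bullet> (y - c)\<bar> < r"
      using that Cauchy_Schwarz_ineq2[of v "y - c"] v by (simp add: dist_norm norm_minus_commute)
    then have "2 * r * \<bar>v \<bullet> (y - c)\<bar> < 2 * r * r" using r by simp
    moreover have "w \<bullet> y - w \<bullet> c = 2 * r * (v \<bullet> (y - c))" "w \<bullet> w = 4 * r\<^sup>2"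
      using v by (simp_all add: w_def algebra_simps power2_eq_square norm_eq_1)
    ultimately have "\<bar>w \<bullet> y - w \<bullet> c\<bar> < 2 * r\<^sup>2" using r by (simp add: abs_mult power2_eq_square)
    with \<open>w \<bullet> w = 4 * r\<^sup>2\<close> show ?thesis by (simp add: abs_less_iff)
  qed
  have ball: "ball c r \<in> sets lebesgue" by simp
  have "emeasure lebesgue (\<Union>k<N. ball (c + (2 * real k * r) *\<^sub>R v) r)
      = of_nat N * emeasure lebesgue (ball c r)"
    unfolding balls by (rule emeasure_UN_translates_strip[OF ball strip])
  also have "\<dots> = ennreal (real N * r ^ DIM('a) * unit_ball_vol DIM('a))"
    using r by (simp add: emeasure_ball ennreal_of_nat_eq_real_of_nat ennreal_mult' mult_ac)
  finally show ?thesis .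
qed

lemma lmeasurable_slab:
  fixes \<nu> z :: "'a::euclidean_space"
  shows "{y. 0 < \<nu> \<bullet> (y - z) \<and> \<nu> \<bullet> (y - z) < T \<and> norm (y - z) < R} \<in> lmeasurable"
proof (rule lmeasurable_open)
  show "bounded {y. 0 < \<nu> \<bullet> (y - z) \<and> \<nu> \<bullet> (y - z) < T \<and> norm (y - z) < R}"
    by (rule bounded_subset[OF bounded_ball[of z R]]) (auto simp: dist_norm norm_minus_commute)
qed (intro open_Collect_conj open_Collect_less continuous_intros)

lemma emeasure_slab_translates_le:
  fixes \<nu> z :: "'a::euclidean_space"
  assumes \<nu>: "norm \<nu> = 1" and T: "T > 0" and R: "R > 0"
  shows "of_nat (nat \<lfloor>R / T\<rfloor> + 1) * emeasure lebesgue {y. 0 < \<nu> \<bullet> (y - z) \<and> \<nu> \<bullet> (y - z) < T \<and> norm (y - z) < R}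
    \<le> emeasure lebesgue (ball z (2 * R))"
proof -
  define S where "S = {y. 0 < \<nu> \<bullet> (y - z) \<and> \<nu> \<bullet> (y - z) < T \<and> norm (y - z) < R}"
  define N where "N = nat \<lfloor>R / T\<rfloor> + 1"
  have S: "S \<in> lmeasurable" unfolding S_def by (rule lmeasurable_slab)
  have strip: "T * (\<nu> \<bullet> z) < (T *\<^sub>R \<nu>) \<bullet> y \<and> (T *\<^sub>R \<nu>) \<bullet> y < T * (\<nu> \<bullet> z) + (T *\<^sub>R \<nu>) \<bullet> (T *\<^sub>R \<nu>)"
    if "y \<in> S" for y
  proof -
    have "0 < T * (\<nu> \<bullet> (y - z))" "T * (\<nu> \<bullet> (y - z)) < T * T" using that T by (simp_all add: S_def)
    then show ?thesis using \<nu> by (simp add: norm_eq_1 algebra_simps)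
  qed
  have "(+) (real k *\<^sub>R T *\<^sub>R \<nu>) ` S \<subseteq> ball z (2 * R)" if "k < N" for k
  proof
    fix y assume "y \<in> (+) (real k *\<^sub>R T *\<^sub>R \<nu>) ` S"
    then obtain s where s: "s \<in> S" "y = real k *\<^sub>R T *\<^sub>R \<nu> + s" by blast
    have "int k \<le> \<lfloor>R / T\<rfloor>" using that R T by (simp add: N_def less_Suc_eq_le le_nat_iff)
    then have "real k * T \<le> R" using T by (simp add: le_floor_iff le_divide_eq)
    moreover have "norm (y - z) \<le> real k * T + norm (s - z)"
      using s(2) norm_triangle_ineq[of "real k *\<^sub>R T *\<^sub>R \<nu>" "s - z"] T \<nu> by (simp add: algebra_simps)
    ultimately show "y \<in> ball z (2 * R)"
      using s(1) by (simp add: S_def dist_norm norm_minus_commute)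
  qed
  then have "emeasure lebesgue (\<Union>k<N. (+) (real k *\<^sub>R T *\<^sub>R \<nu>) ` S) \<le> emeasure lebesgue (ball z (2 * R))"
    by (intro emeasure_mono) auto
  then show ?thesis
    unfolding S_def[symmetric] N_def[symmetric]
    by (simp only: emeasure_UN_translates_strip[OF fmeasurableD[OF S] strip])
qed

lemma emeasure_slab_le:
  fixes \<nu> z :: "'a::euclidean_space"
  assumes \<nu>: "norm \<nu> = 1" and T: "T > 0" and R: "R > 0"
  shows "emeasure lebesgue {y. 0 < \<nu> \<bullet> (y - z) \<and> \<nu> \<bullet> (y - z) < T \<and> norm (y - z) < R}
    \<le> ennreal (2 ^ DIM('a) * R ^ (DIM('a) - 1) * T * unit_ball_vol DIM('a))"
proof -
  define S where "S = {y. 0 < \<nu> \<bullet> (y - z) \<and> \<nu> \<bullet> (y - z) < T \<and> norm (y - z) < R}"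
  define N where "N = nat \<lfloor>R / T\<rfloor> + 1"
  define \<omega> where "\<omega> = unit_ball_vol DIM('a)"
  have S: "S \<in> lmeasurable" unfolding S_def by (rule lmeasurable_slab)
  \<comment> \<open>\<open>N > R / T\<close> disjoint translates of the slab fit into \<open>ball z (2 * R)\<close>\<close>
  have "ennreal (real N * measure lebesgue S) = of_nat N * emeasure lebesgue S"
    by (simp add: emeasure_eq_measure2[OF S] ennreal_of_nat_eq_real_of_nat ennreal_mult')
  also have "\<dots> \<le> emeasure lebesgue (ball z (2 * R))"
    unfolding S_def N_def by (rule emeasure_slab_translates_le[OF \<nu> T R])
  also have "\<dots> = ennreal (\<omega> * (2 * R) ^ DIM('a))" using R by (simp add: emeasure_ball \<omega>_def)
  finally have packing: "real N * measure lebesgue S \<le> \<omega> * (2 * R) ^ DIM('a)"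
    using R by (simp add: \<omega>_def)
  have "measure lebesgue S = T / R * (R / T * measure lebesgue S)" using T R by simp
  also have "\<dots> \<le> T / R * (real N * measure lebesgue S)"
    using T R by (intro mult_left_mono mult_right_mono) (auto simp: N_def, linarith)
  also have "\<dots> \<le> T / R * (\<omega> * (2 * R) ^ DIM('a))"
    using T R packing by (intro mult_left_mono) auto
  also have "\<dots> = 2 ^ DIM('a) * R ^ (DIM('a) - 1) * T * \<omega>"
  proof -
    have "R ^ DIM('a) = R * R ^ (DIM('a) - 1)"
      by (cases "DIM('a)") simp_all
    then show ?thesis using R by (simp add: power_mult_distrib)
  qed
  finally show ?thesis
    unfolding S_def[symmetric] emeasure_eq_measure2[OF S] \<omega>_def by (rule ennreal_leI)
qed

section \<open>Real inequalities\<close>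

lemma le_powr_inverse_of_powr_le:
  fixes h X n :: real
  assumes "h > 0" "n > 0" "h powr n \<le> X"
  shows "h \<le> X powr (1 / n)"
proof -
  have "h = (h powr n) powr (1 / n)" using assms by (simp add: powr_powr)
  also have "\<dots> \<le> X powr (1 / n)" using assms by (intro powr_mono2) auto
  finally show ?thesis .
qed

lemma less_threshold_of_linear_le_sublinear:
  fixes h dp D A a X \<delta> :: real
  assumes h: "h > 0" and dp: "dp > 0" "dp + \<delta> \<le> D" and \<delta>: "\<delta> > 0" and A: "A \<ge> 0"
    and a: "0 < a" "a < 1" and X: "X > 0"
    and le: "h / (4 * dp) * X \<le> h / 2 + A * (X + \<delta>) powr a"
  shows "X < max (4 * D) ((8 * D * A / h) powr (1 / (1 - a)))"
proof -
  define Y where "Y = X + \<delta>"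
  have Y: "Y > 0" "Y powr a > 0" using X \<delta> by (simp_all add: Y_def)
  have "X = (4 * dp / h) * (h / (4 * dp) * X)" using h dp by simp
  also have "\<dots> \<le> (4 * dp / h) * (h / 2 + A * Y powr a)"
    using le h dp by (intro mult_left_mono) (auto simp: Y_def)
  also have "\<dots> = 2 * dp + 4 * dp * A * Y powr a / h" using h by (simp add: field_simps)
  also have "4 * dp * A * Y powr a / h \<le> 4 * D * A * Y powr a / h"
    using dp \<delta> A Y h by (intro divide_right_mono mult_right_mono) auto
  finally have Yle: "Y \<le> 2 * D + 4 * D * A * Y powr a / h"
    using dp \<delta> by (simp add: Y_def)
  show ?thesis
  proof (rule ccontr)
    assume "\<not> ?thesis"
    then have Y4: "Y > 4 * D" and Ybig: "Y > (8 * D * A / h) powr (1 / (1 - a))"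
      using \<delta> by (auto simp: Y_def)
    \<comment> \<open>a large \<open>Y\<close> violates \<open>Yle\<close>, since \<open>Y\<close> beats \<open>Y powr a\<close>\<close>
    have "Y / 2 < 4 * D * A * Y powr a / h" using Yle Y4 by linarith
    then have "Y < (8 * D * A / h) * Y powr a" by (simp add: field_simps)
    then have "Y powr (1 - a) < 8 * D * A / h" using Y by (simp add: powr_diff field_simps)
    then have "(Y powr (1 - a)) powr (1 / (1 - a)) < (8 * D * A / h) powr (1 / (1 - a))"
      using a Y by (intro powr_less_mono2) auto
    then show False using Ybig Y a by (simp add: powr_powr)
  qed
qed

text \<open>The two branches come from the two possible widths \<open>T\<close> of the slab in the height estimate.\<close>

definition height_bound :: "real \<Rightarrow> real \<Rightarrow> real \<Rightarrow> real \<Rightarrow> real" where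
  "height_bound n \<gamma> K A =
     (let b = (1 + \<gamma>) / (1 - (2 + \<gamma>) / n)
      in max ((K * 4 powr (1 + \<gamma>)) powr (1 / n))
             ((K * 8 powr b) powr (1 / (n + b)) * A powr (b / (n + b))))"

lemma height_bound_nonneg: "0 \<le> height_bound n \<gamma> K A"
  by (simp add: height_bound_def Let_def le_max_iff_disj)

lemma height_le_first_branch:
  fixes n \<gamma> K h D :: real
  assumes "n > 0" "\<gamma> \<ge> 0" "K > 0" "h > 0" "D > 0"
    and "h powr n \<le> K * D * (4 * D) powr (1 + \<gamma>)"
  shows "h \<le> (K * 4 powr (1 + \<gamma>)) powr (1 / n) * D powr ((2 + \<gamma>) / n)"
proof -
  have "D powr (2 + \<gamma>) = D powr 1 * D powr (1 + \<gamma>)" unfolding powr_add[symmetric] by simp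
  then have eq: "K * D * (4 * D) powr (1 + \<gamma>) = (K * 4 powr (1 + \<gamma>)) * D powr (2 + \<gamma>)"
    using assms by (simp add: powr_mult)
  have "h \<le> ((K * 4 powr (1 + \<gamma>)) * D powr (2 + \<gamma>)) powr (1 / n)"
    using assms(6) unfolding eq by (rule le_powr_inverse_of_powr_le[OF assms(4,1)])
  also have "\<dots> = (K * 4 powr (1 + \<gamma>)) powr (1 / n) * D powr ((2 + \<gamma>) / n)"
    using assms by (simp add: powr_mult powr_powr)
  finally show ?thesis .
qed

lemma height_le_second_branch:
  fixes n \<gamma> K h D A a b :: real
  assumes "n > 0" "\<gamma> \<ge> 0" "K > 0" "h > 0" "D > 0" "A > 0"
    and a: "a = (2 + \<gamma>) / n" "a < 1" and b: "b = (1 + \<gamma>) / (1 - a)"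
    and le: "h powr n \<le> K * D * ((8 * D * A / h) powr (1 / (1 - a))) powr (1 + \<gamma>)"
  shows "h \<le> (K * 8 powr b) powr (1 / (n + b)) * A powr (b / (n + b)) * D powr a"
proof -
  have b0: "b > 0" using assms by simp
  have "((8 * D * A / h) powr (1 / (1 - a))) powr (1 + \<gamma>) = (8 * D * A / h) powr b"
    by (simp add: powr_powr b)
  also have "\<dots> = 8 powr b * A powr b * D powr b / h powr b"
    using assms by (simp add: powr_divide powr_mult)
  finally have "h powr n \<le> K * D * (8 powr b * A powr b * D powr b / h powr b)"
    using le by simp
  then have "h powr n * h powr b \<le> K * D * (8 powr b * A powr b * D powr b / h powr b) * h powr b"
    by (rule mult_right_mono) simp
  also have "\<dots> = (K * 8 powr b) * A powr b * (D powr 1 * D powr b)"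
    using assms(4,5) by simp
  finally have "h powr (n + b) \<le> (K * 8 powr b) * A powr b * D powr (1 + b)"
    by (simp only: powr_add)
  moreover have "n + b > 0" using assms(1) b0 by linarith
  ultimately have "h \<le> ((K * 8 powr b) * A powr b * D powr (1 + b)) powr (1 / (n + b))"
    using le_powr_inverse_of_powr_le[OF assms(4)] by blast
  also have "\<dots> = (K * 8 powr b) powr (1 / (n + b)) * A powr (b / (n + b)) * D powr ((1 + b) / (n + b))"
    using assms by (simp add: powr_mult powr_powr)
  also have "(1 + b) / (n + b) = a"
  proof -
    have "a * n = 2 + \<gamma>" "b * (1 - a) = 1 + \<gamma>" using assms by simp_all
    then have "1 + b = a * (n + b)" by (simp add: algebra_simps)
    then show ?thesis using \<open>n + b > 0\<close> by (simp add: field_simps)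
  qed
  finally show ?thesis .
qed

lemma height_le_height_bound:
  fixes n \<gamma> K h D A :: real
  assumes "0 \<le> \<gamma>" "2 + \<gamma> < n" "K > 0" "h > 0" "D > 0" "A \<ge> 0"
    and le: "h powr n \<le> K * D * max (4 * D) ((8 * D * A / h) powr (1 / (1 - (2 + \<gamma>) / n))) powr (1 + \<gamma>)"
  shows "h \<le> height_bound n \<gamma> K A * D powr ((2 + \<gamma>) / n)"
proof -
  define a where "a = (2 + \<gamma>) / n"
  define b where "b = (1 + \<gamma>) / (1 - a)"
  have n: "n > 0" and a: "a < 1" using assms by (auto simp: a_def)
  show ?thesis
  proof (cases "(8 * D * A / h) powr (1 / (1 - a)) \<le> 4 * D")
    case True
    then have "h \<le> (K * 4 powr (1 + \<gamma>)) powr (1 / n) * D powr a"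
      using height_le_first_branch[OF n assms(1,3,4,5)] le by (simp add: a_def)
    then show ?thesis using assms(5) unfolding height_bound_def Let_def a_def
      by (smt (verit) max.cobounded1 mult_right_mono powr_ge_zero)
  next
    case False
    then have "A > 0" using assms(5,6) by (cases "A = 0") auto
    then have "h \<le> (K * 8 powr b) powr (1 / (n + b)) * A powr (b / (n + b)) * D powr a"
      using height_le_second_branch[OF n assms(1,3,4,5) _ a_def a b_def] le False by (simp add: a_def)
    then show ?thesis using assms(5) unfolding height_bound_def Let_def b_def a_def
      by (smt (verit) max.cobounded2 mult_right_mono powr_ge_zero)
  qed
qed

lemma height_bound_fixpoint:
  fixes n \<gamma> K :: real
  assumes "0 \<le> \<gamma>" "2 + \<gamma> < n"
  shows "\<exists>C. \<forall>A \<ge> 0. A \<le> height_bound n \<gamma> K A \<longrightarrow> A \<le> C"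
proof -
  define b where "b = (1 + \<gamma>) / (1 - (2 + \<gamma>) / n)"
  define \<theta> where "\<theta> = b / (n + b)"
  define C1 where "C1 = (K * 4 powr (1 + \<gamma>)) powr (1 / n)"
  define C2 where "C2 = (K * 8 powr b) powr (1 / (n + b))"
  have "n > 0" "(2 + \<gamma>) / n < 1" using assms by auto
  then have "b > 0" using assms(1) by (simp add: b_def)
  then have \<theta>: "0 < \<theta>" "\<theta> < 1" using assms by (auto simp: \<theta>_def field_simps)
  \<comment> \<open>\<open>height_bound\<close> grows like \<open>A powr \<theta>\<close> with \<open>\<theta> < 1\<close>\<close>
  have "A \<le> max C1 (C2 powr (1 / (1 - \<theta>)))" if "A \<ge> 0" "A \<le> max C1 (C2 * A powr \<theta>)" for A
  proof (cases "A \<le> C1")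
    case False
    moreover have "C1 \<ge> 0" by (simp add: C1_def)
    ultimately have "A > 0" "A \<le> C2 * A powr \<theta>" using that by (auto simp: max_def split: if_splits)
    then have "A powr (1 - \<theta>) \<le> C2" by (simp add: powr_diff field_simps)
    then have "(A powr (1 - \<theta>)) powr (1 / (1 - \<theta>)) \<le> C2 powr (1 / (1 - \<theta>))"
      using \<theta> by (intro powr_mono2) auto
    then show ?thesis using \<open>A > 0\<close> \<theta> by (simp add: powr_powr)
  qed simp
  then show ?thesis
    by (auto simp: height_bound_def Let_def b_def[symmetric] C1_def[symmetric] C2_def[symmetric]
        \<theta>_def[symmetric])
qed

section \<open>Convex subsolutions of the Monge-Ampere inequality\<close>

lemma interior_touching_point:
  fixes \<Omega> :: "'a::euclidean_space set" and u :: "'a \<Rightarrow> real"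
  assumes "open \<Omega>" "bounded \<Omega>" "continuous_on (closure \<Omega>) u" "\<forall>x\<in>frontier \<Omega>. u x = 0"
    and x0: "x0 \<in> \<Omega>" and below: "\<And>y. y \<in> closure \<Omega> \<Longrightarrow> p \<bullet> (y - x0) < - u x0"
  obtains x1 where "x1 \<in> \<Omega>" "p \<in> subdiff u \<Omega> x1"
    "\<And>y. y \<in> closure \<Omega> \<Longrightarrow> u x1 - p \<bullet> x1 \<le> u y - p \<bullet> y"
proof -
  have compact: "compact (closure \<Omega>)" using assms(2) by (simp add: compact_eq_bounded_closed bounded_closure)
  have x0_cl: "x0 \<in> closure \<Omega>" using x0 closure_subset by blast
  then have nonempty: "closure \<Omega> \<noteq> {}" by auto
  have cont: "continuous_on (closure \<Omega>) (\<lambda>y. u y - p \<bullet> y)" by (intro continuous_intros assms(3))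
  obtain x1 where x1: "x1 \<in> closure \<Omega>" "\<And>y. y \<in> closure \<Omega> \<Longrightarrow> u x1 - p \<bullet> x1 \<le> u y - p \<bullet> y"
    using continuous_attains_inf[OF compact nonempty cont] by auto
  have "x1 \<in> \<Omega>"
  proof (rule ccontr)
    assume "x1 \<notin> \<Omega>"
    then have "u x1 = 0" using x1(1) assms(1,4) by (simp add: frontier_def interior_open)
    then show False
      using x1(2)[OF x0_cl] below[OF x1(1)] by (simp add: inner_diff_right)
  qed
  moreover have "p \<in> subdiff u \<Omega> x1"
    using x1(2) closure_subset by (force simp: subdiff_def inner_diff_right)
  ultimately show ?thesis using that x1(2) by blast
qed

definition height_const :: "nat \<Rightarrow> real \<Rightarrow> real \<Rightarrow> real" where
  "height_const n M R = M * 4 ^ (n + 1) * R ^ (2 * n - 2)"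

locale aleksandrov_subsolution =
  fixes \<Omega> :: "'a::euclidean_space set" and u :: "'a \<Rightarrow> real" and M \<gamma> R :: real
  assumes open_domain: "open \<Omega>" and convex_domain: "convex \<Omega>" and bounded_domain: "bounded \<Omega>"
    and nonempty_domain: "\<Omega> \<noteq> {}"
    and continuous: "continuous_on (closure \<Omega>) u" and convex: "convex_on \<Omega> u"
    and frontier_zero: "\<forall>x\<in>frontier \<Omega>. u x = 0"
    and det_le: "aleksandrov_det_le u \<Omega> (\<lambda>x. M * infdist x (frontier \<Omega>) powr \<gamma>)"
    and M_pos: "M > 0" and \<gamma>_nonneg: "0 \<le> \<gamma>" and \<gamma>_less: "\<gamma> < real DIM('a) - 2"
    and diam_less: "\<And>x y. x \<in> closure \<Omega> \<Longrightarrow> y \<in> closure \<Omega> \<Longrightarrow> norm (x - y) < R"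
begin

lemma R_pos: "R > 0"
proof -
  obtain x where "x \<in> \<Omega>" using nonempty_domain by blast
  then show ?thesis using diam_less[of x x] closure_subset by auto
qed

lemma frontier_nonempty: "frontier \<Omega> \<noteq> {}"
proof -
  have "\<Omega> \<noteq> UNIV" using bounded_domain not_bounded_UNIV by blast
  then show ?thesis using nonempty_domain by (simp add: frontier_eq_empty)
qed

lemma nonpos: "x \<in> \<Omega> \<Longrightarrow> u x \<le> 0"
proof -
  obtain z where "z \<in> frontier \<Omega>" using frontier_nonempty by blast
  then show "x \<in> \<Omega> \<Longrightarrow> u x \<le> 0"
    by (intro convex_on_nonpos_if_frontier_zero[OF open_domain convex_domain bounded_domain convex
          continuous frontier_zero])
qed

lemma not_in_frontier: "x \<in> \<Omega> \<Longrightarrow> x \<notin> frontier \<Omega>"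
  using open_domain by (simp add: frontier_def interior_open)

lemma subgradient_at_low_point:
  assumes z: "z \<in> frontier \<Omega>" and \<nu>: "norm \<nu> = 1" "\<And>y. y \<in> \<Omega> \<Longrightarrow> 0 < \<nu> \<bullet> (y - z)"
    and x0: "x0 \<in> \<Omega>" and w: "norm w < - u x0 / (2 * R)"
    and c: "0 \<le> c" "c * (\<nu> \<bullet> (x0 - z)) \<le> - u x0 / 2"
  obtains x1 where "x1 \<in> \<Omega>" "w - c *\<^sub>R \<nu> \<in> subdiff u \<Omega> x1"
    "c * (\<nu> \<bullet> (x1 - z)) + u x0 / 2 \<le> - u x1"
proof -
  have z_cl: "z \<in> closure \<Omega>" using z by (simp add: frontier_def)
  have x0_cl: "x0 \<in> closure \<Omega>" using x0 closure_subset by blast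
  have w_small: "\<bar>w \<bullet> v\<bar> < - u x0 / 2" if "norm v < R" for v
  proof -
    have "\<bar>w \<bullet> v\<bar> \<le> norm w * R"
      using Cauchy_Schwarz_ineq2[of w v] that by (meson less_imp_le mult_left_mono norm_ge_zero order_trans)
    also have "\<dots> < - u x0 / (2 * R) * R" using w R_pos by (intro mult_strict_right_mono) auto
    finally show ?thesis using R_pos by simp
  qed
  have "closure \<Omega> \<subseteq> {y. \<nu> \<bullet> (y - z) \<ge> 0}"
    using \<nu>(2) by (intro closure_minimal) (auto simp: less_imp_le intro!: closed_Collect_le continuous_intros)
  then have below: "(w - c *\<^sub>R \<nu>) \<bullet> (y - x0) < - u x0" if y: "y \<in> closure \<Omega>" for y
  proof -
    have "\<nu> \<bullet> (y - x0) = \<nu> \<bullet> (y - z) - \<nu> \<bullet> (x0 - z)" by (simp add: inner_diff_right)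
    then have "- (\<nu> \<bullet> (x0 - z)) \<le> \<nu> \<bullet> (y - x0)" using y \<open>closure \<Omega> \<subseteq> _\<close> by auto
    then have "c * - (\<nu> \<bullet> (x0 - z)) \<le> c * (\<nu> \<bullet> (y - x0))" by (rule mult_left_mono[OF _ c(1)])
    moreover have "w \<bullet> (y - x0) < - u x0 / 2" using w_small[OF diam_less[OF y x0_cl]] by linarith
    moreover have "(w - c *\<^sub>R \<nu>) \<bullet> (y - x0) = w \<bullet> (y - x0) - c * (\<nu> \<bullet> (y - x0))"
      by (simp add: inner_diff_left)
    ultimately show ?thesis using c(2) by linarith
  qed
  obtain x1 where x1: "x1 \<in> \<Omega>" "w - c *\<^sub>R \<nu> \<in> subdiff u \<Omega> x1"
    "\<And>y. y \<in> closure \<Omega> \<Longrightarrow> u x1 - (w - c *\<^sub>R \<nu>) \<bullet> x1 \<le> u y - (w - c *\<^sub>R \<nu>) \<bullet> y"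
    by (rule interior_touching_point[OF open_domain bounded_domain continuous frontier_zero x0 below]) auto
  \<comment> \<open>compare the touching plane with \<open>u\<close> at the boundary point \<open>z\<close>, where \<open>u z = 0\<close>\<close>
  have "x1 \<in> closure \<Omega>" using x1(1) closure_subset by blast
  then have "\<bar>w \<bullet> (z - x1)\<bar> < - u x0 / 2" by (rule w_small[OF diam_less[OF z_cl]])
  moreover have "(w - c *\<^sub>R \<nu>) \<bullet> (z - x1) = w \<bullet> (z - x1) + c * (\<nu> \<bullet> (x1 - z))"
    by (simp add: inner_diff_left inner_diff_right algebra_simps)
  moreover have "u z = 0" using frontier_zero z by blast
  ultimately have "c * (\<nu> \<bullet> (x1 - z)) + u x0 / 2 \<le> - u x1"
    using x1(3)[OF z_cl] by (simp add: inner_diff_right)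
  with x1(1,2) show ?thesis by (rule that)
qed

lemma monge_ampere_slab_le:
  assumes \<nu>: "norm \<nu> = 1" "\<And>y. y \<in> \<Omega> \<Longrightarrow> 0 < \<nu> \<bullet> (y - z)" and z: "z \<in> closure \<Omega>" and T: "T > 0"
  shows "monge_ampere u \<Omega> {y \<in> \<Omega>. \<nu> \<bullet> (y - z) < T}
    \<le> ennreal (M * T powr (1 + \<gamma>) * 2 ^ DIM('a) * R ^ (DIM('a) - 1) * unit_ball_vol DIM('a))"
proof -
  define E where "E = {y \<in> \<Omega>. \<nu> \<bullet> (y - z) < T}"
  define S where "S = {y. 0 < \<nu> \<bullet> (y - z) \<and> \<nu> \<bullet> (y - z) < T \<and> norm (y - z) < R}"
  have "E = \<Omega> \<inter> {y. \<nu> \<bullet> (y - z) < T}" by (auto simp: E_def)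
  then have "open E" by (simp add: open_Int open_domain open_Collect_less continuous_intros)
  then have E: "E \<in> sets borel" "E \<subseteq> \<Omega>" by (auto simp: E_def)
  have "S \<in> sets borel" unfolding S_def
    by (intro borel_open open_Collect_conj open_Collect_less continuous_intros)
  moreover have "E \<subseteq> S"
    using \<nu>(2) diam_less[OF _ z] closure_subset by (fastforce simp: E_def S_def)
  ultimately have ES: "emeasure lebesgue E \<le> emeasure lebesgue S" by (intro emeasure_mono) auto
  have "monge_ampere u \<Omega> E \<le> (\<integral>\<^sup>+ x \<in> E. ennreal (M * infdist x (frontier \<Omega>) powr \<gamma>) \<partial>lebesgue)"
    using det_le E by (simp add: aleksandrov_det_le_def)
  also have "\<dots> \<le> (\<integral>\<^sup>+ x. ennreal (M * T powr \<gamma>) * indicator E x \<partial>lebesgue)"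
  proof (intro nn_integral_mono)
    fix x
    have "infdist x (frontier \<Omega>) powr \<gamma> \<le> T powr \<gamma>" if xE: "x \<in> E"
    proof -
      have "infdist x (frontier \<Omega>) \<le> \<nu> \<bullet> (x - z)"
        using xE infdist_frontier_le_inner[OF \<nu>] by (simp add: E_def)
      then show ?thesis
        using xE \<gamma>_nonneg by (intro powr_mono2) (auto simp: E_def infdist_nonneg)
    qed
    then show "ennreal (M * infdist x (frontier \<Omega>) powr \<gamma>) * indicator E x
        \<le> ennreal (M * T powr \<gamma>) * indicator E x"
      using M_pos by (auto intro: ennreal_leI simp: indicator_def)
  qed
  also have "\<dots> = ennreal (M * T powr \<gamma>) * emeasure lebesgue E"
    using E by (intro nn_integral_cmult_indicator) auto
  also have "\<dots> \<le> ennreal (M * T powr \<gamma>) * ennreal (2 ^ DIM('a) * R ^ (DIM('a) - 1) * T * unit_ball_vol DIM('a))"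
    using ES emeasure_slab_le[OF \<nu>(1) T R_pos, of z] by (intro mult_left_mono) (auto simp: S_def)
  also have "\<dots> = ennreal (M * T powr (1 + \<gamma>) * 2 ^ DIM('a) * R ^ (DIM('a) - 1) * unit_ball_vol DIM('a))"
    using M_pos T by (simp add: ennreal_mult'[symmetric] powr_add mult_ac)
  finally show ?thesis by (simp add: E_def)
qed

lemma ball_subset_subdiff_image:
  assumes z: "z \<in> frontier \<Omega>" and \<nu>: "norm \<nu> = 1" "\<And>y. y \<in> \<Omega> \<Longrightarrow> 0 < \<nu> \<bullet> (y - z)"
    and x0: "x0 \<in> \<Omega>" and \<alpha>: "\<alpha> = - u x0 / (4 * (\<nu> \<bullet> (x0 - z)))"
    and c: "\<alpha> \<le> c" "c * (\<nu> \<bullet> (x0 - z)) \<le> - u x0 / 2"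
    and localized: "\<And>x. x \<in> \<Omega> \<Longrightarrow> \<alpha> * (\<nu> \<bullet> (x - z)) + u x0 / 2 \<le> - u x \<Longrightarrow> \<nu> \<bullet> (x - z) < T"
  shows "ball (- c *\<^sub>R \<nu>) (- u x0 / (2 * R)) \<subseteq> (\<Union>x\<in>{y \<in> \<Omega>. \<nu> \<bullet> (y - z) < T}. subdiff u \<Omega> x)"
proof
  fix p assume "p \<in> ball (- c *\<^sub>R \<nu>) (- u x0 / (2 * R))"
  then have w: "norm (p + c *\<^sub>R \<nu>) < - u x0 / (2 * R)" by (simp add: dist_norm norm_minus_commute)
  have "0 \<le> \<alpha>" unfolding \<alpha> using nonpos[OF x0] \<nu>(2)[OF x0] by (intro divide_nonneg_pos) auto
  then obtain x1 where x1: "x1 \<in> \<Omega>" "p \<in> subdiff u \<Omega> x1" "c * (\<nu> \<bullet> (x1 - z)) + u x0 / 2 \<le> - u x1"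
    using subgradient_at_low_point[OF z \<nu> x0 w order_trans c(2)] c(1) by auto
  have "\<alpha> * (\<nu> \<bullet> (x1 - z)) \<le> c * (\<nu> \<bullet> (x1 - z))"
    using c(1) \<nu>(2)[OF x1(1)] by (intro mult_right_mono) auto
  then have "\<nu> \<bullet> (x1 - z) < T" using localized[OF x1(1)] x1(3) by linarith
  then show "p \<in> (\<Union>x\<in>{y \<in> \<Omega>. \<nu> \<bullet> (y - z) < T}. subdiff u \<Omega> x)" using x1(1,2) by blast
qed

lemma slope_balls_subset_subdiff_image:
  assumes z: "z \<in> frontier \<Omega>" and \<nu>: "norm \<nu> = 1" "\<And>y. y \<in> \<Omega> \<Longrightarrow> 0 < \<nu> \<bullet> (y - z)"
    and x0: "x0 \<in> \<Omega>" and \<alpha>: "\<alpha> = - u x0 / (4 * (\<nu> \<bullet> (x0 - z)))" and r: "r = - u x0 / (2 * R)"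
    and localized: "\<And>x. x \<in> \<Omega> \<Longrightarrow> \<alpha> * (\<nu> \<bullet> (x - z)) + u x0 / 2 \<le> - u x \<Longrightarrow> \<nu> \<bullet> (x - z) < T"
  shows "(\<Union>k<nat \<lceil>R / (4 * (\<nu> \<bullet> (x0 - z)))\<rceil>. ball ((- \<alpha>) *\<^sub>R \<nu> + (2 * real k * r) *\<^sub>R (- \<nu>)) r)
    \<subseteq> (\<Union>x\<in>{y \<in> \<Omega>. \<nu> \<bullet> (y - z) < T}. subdiff u \<Omega> x)"
proof (intro UN_least)
  fix k assume "k \<in> {..<nat \<lceil>R / (4 * (\<nu> \<bullet> (x0 - z)))\<rceil>}"
  then have "int k < \<lceil>R / (4 * (\<nu> \<bullet> (x0 - z)))\<rceil>" by (simp add: zless_nat_eq_int_zless)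
  then have "real k * (4 * (\<nu> \<bullet> (x0 - z))) \<le> R"
    using \<nu>(2)[OF x0] by (simp add: less_ceiling_iff pos_less_divide_eq)
  then have "real k * (4 * (\<nu> \<bullet> (x0 - z))) * - u x0 \<le> R * - u x0"
    using nonpos[OF x0] by (intro mult_right_mono) auto
  then have "2 * real k * r \<le> \<alpha>"
    using \<nu>(2)[OF x0] R_pos by (simp add: r \<alpha> field_simps)
  then have "(\<alpha> + 2 * real k * r) * (\<nu> \<bullet> (x0 - z)) \<le> 2 * \<alpha> * (\<nu> \<bullet> (x0 - z))"
    using \<nu>(2)[OF x0] by (intro mult_right_mono) auto
  also have "\<dots> = - u x0 / 2" using \<nu>(2)[OF x0] by (simp add: \<alpha>)
  finally have c2: "(\<alpha> + 2 * real k * r) * (\<nu> \<bullet> (x0 - z)) \<le> - u x0 / 2" .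
  have "0 \<le> r" unfolding r using nonpos[OF x0] R_pos by (intro divide_nonneg_pos) auto
  then have c1: "\<alpha> \<le> \<alpha> + 2 * real k * r" by simp
  have "ball (- (\<alpha> + 2 * real k * r) *\<^sub>R \<nu>) r
      \<subseteq> (\<Union>x\<in>{y \<in> \<Omega>. \<nu> \<bullet> (y - z) < T}. subdiff u \<Omega> x)"
    using ball_subset_subdiff_image[OF z \<nu> x0 \<alpha> c1 c2 localized] unfolding r .
  moreover have "(- \<alpha>) *\<^sub>R \<nu> + (2 * real k * r) *\<^sub>R (- \<nu>) = - (\<alpha> + 2 * real k * r) *\<^sub>R \<nu>"
    by (simp add: algebra_simps)
  ultimately show "ball ((- \<alpha>) *\<^sub>R \<nu> + (2 * real k * r) *\<^sub>R (- \<nu>)) r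
      \<subseteq> (\<Union>x\<in>{y \<in> \<Omega>. \<nu> \<bullet> (y - z) < T}. subdiff u \<Omega> x)" by simp
qed

lemma disjoint_slope_balls_bound:
  assumes \<nu>: "norm \<nu> = 1" "\<And>y. y \<in> \<Omega> \<Longrightarrow> 0 < \<nu> \<bullet> (y - z)" and z: "z \<in> closure \<Omega>"
    and T: "T > 0" and v: "norm v = 1" and r: "r > 0"
    and balls: "(\<Union>k<N. ball (c + (2 * real k * r) *\<^sub>R v) r)
      \<subseteq> (\<Union>x\<in>{y \<in> \<Omega>. \<nu> \<bullet> (y - z) < T}. subdiff u \<Omega> x)"
  shows "real N * r ^ DIM('a) \<le> M * T powr (1 + \<gamma>) * 2 ^ DIM('a) * R ^ (DIM('a) - 1)"
proof -
  have "ennreal (real N * r ^ DIM('a) * unit_ball_vol DIM('a))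
      = emeasure lebesgue (\<Union>k<N. ball (c + (2 * real k * r) *\<^sub>R v) r)"
    using v r by (intro emeasure_UN_balls_on_line[symmetric])
  also have "\<dots> \<le> monge_ampere u \<Omega> {y \<in> \<Omega>. \<nu> \<bullet> (y - z) < T}"
    unfolding monge_ampere_def using balls by (intro emeasure_le_outer_lebesgue) auto
  also have "\<dots> \<le> ennreal (M * T powr (1 + \<gamma>) * 2 ^ DIM('a) * R ^ (DIM('a) - 1) * unit_ball_vol DIM('a))"
    by (rule monge_ampere_slab_le[OF \<nu> z T])
  finally have "real N * r ^ DIM('a) * unit_ball_vol DIM('a)
      \<le> M * T powr (1 + \<gamma>) * 2 ^ DIM('a) * R ^ (DIM('a) - 1) * unit_ball_vol DIM('a)"
    using M_pos T R_pos by simp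
  then show ?thesis by (rule mult_right_le_imp_le) simp
qed

lemma height_pow_le:
  assumes z: "z \<in> frontier \<Omega>" and \<nu>: "norm \<nu> = 1" "\<And>y. y \<in> \<Omega> \<Longrightarrow> 0 < \<nu> \<bullet> (y - z)"
    and x0: "x0 \<in> \<Omega>" and h: "u x0 < 0" and T: "T > 0"
    and localized: "\<And>x. x \<in> \<Omega> \<Longrightarrow>
      - u x0 / (4 * (\<nu> \<bullet> (x0 - z))) * (\<nu> \<bullet> (x - z)) + u x0 / 2 \<le> - u x \<Longrightarrow> \<nu> \<bullet> (x - z) < T"
  shows "(- u x0) ^ DIM('a)
    \<le> height_const DIM('a) M R * (\<nu> \<bullet> (x0 - z)) * T powr (1 + \<gamma>)"
proof -
  define n where "n = DIM('a)"
  define dp where "dp = \<nu> \<bullet> (x0 - z)"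
  define r where "r = - u x0 / (2 * R)"
  define N where "N = nat \<lceil>R / (4 * dp)\<rceil>"
  have dp: "dp > 0" using \<nu>(2)[OF x0] by (simp add: dp_def)
  have r: "r > 0" using h R_pos by (simp add: r_def divide_neg_pos)
  have N: "R / (4 * dp) \<le> real N" unfolding N_def by (rule real_nat_ceiling_ge)
  have "z \<in> closure \<Omega>" using z by (simp add: frontier_def)
  then have packing: "real N * r ^ n \<le> M * T powr (1 + \<gamma>) * 2 ^ n * R ^ (n - 1)"
    using disjoint_slope_balls_bound[OF \<nu> _ T _ r
        slope_balls_subset_subdiff_image[OF z \<nu> x0 refl r_def localized]] \<nu>(1)
    by (simp add: n_def N_def dp_def)
  have "- u x0 = 2 * R * r" using R_pos by (simp add: r_def)
  then have "(- u x0) ^ n = 2 ^ n * R ^ n * r ^ n" by (simp add: power_mult_distrib)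
  also have "R ^ n = R * R ^ (n - 1)" by (cases n) (simp_all add: n_def)
  also have "2 ^ n * (R * R ^ (n - 1)) * r ^ n = 2 ^ n * R ^ (n - 1) * (R * r ^ n)" by simp
  also have "\<dots> \<le> 2 ^ n * R ^ (n - 1) * (4 * dp * (real N * r ^ n))"
    using N dp r R_pos by (intro mult_left_mono) (simp_all add: field_simps mult_right_mono)
  also have "\<dots> \<le> 2 ^ n * R ^ (n - 1) * (4 * dp * (M * T powr (1 + \<gamma>) * 2 ^ n * R ^ (n - 1)))"
    using dp R_pos packing by (intro mult_left_mono) simp_all
  also have "\<dots> = M * 4 ^ (n + 1) * R ^ (2 * n - 2) * dp * T powr (1 + \<gamma>)"
  proof -
    have "(4::real) ^ (n + 1) = 4 * 2 ^ n * 2 ^ n" by (induct n) simp_all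
    moreover have "R ^ (2 * n - 2) = R ^ (n - 1) * R ^ (n - 1)"
      unfolding power_add[symmetric] by (rule arg_cong[where f = "power R"]) arith
    ultimately show ?thesis by (simp add: mult_ac)
  qed
  finally show ?thesis by (simp add: height_const_def n_def dp_def)
qed

lemma touching_point_in_slab:
  assumes \<delta>: "\<delta> > 0" and A: "A \<ge> 0"
    and bound: "\<And>x. x \<in> \<Omega> \<Longrightarrow> \<bar>u x\<bar> \<le> A * (infdist x (frontier \<Omega>) + \<delta>) powr ((2 + \<gamma>) / DIM('a))"
    and \<nu>: "norm \<nu> = 1" "\<And>y. y \<in> \<Omega> \<Longrightarrow> 0 < \<nu> \<bullet> (y - z)"
    and x0: "x0 \<in> \<Omega>" "u x0 < 0" and D: "\<nu> \<bullet> (x0 - z) + \<delta> \<le> D"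
    and x: "x \<in> \<Omega>" and low: "- u x0 / (4 * (\<nu> \<bullet> (x0 - z))) * (\<nu> \<bullet> (x - z)) + u x0 / 2 \<le> - u x"
  shows "\<nu> \<bullet> (x - z) < max (4 * D) ((8 * D * A / - u x0) powr (1 / (1 - (2 + \<gamma>) / DIM('a))))"
proof -
  define a where "a = (2 + \<gamma>) / DIM('a)"
  have a: "0 < a" "a < 1" using \<gamma>_less \<gamma>_nonneg by (auto simp: a_def)
  have "- u x \<le> A * (infdist x (frontier \<Omega>) + \<delta>) powr a"
    using bound[OF x] by (simp add: a_def)
  also have "\<dots> \<le> A * (\<nu> \<bullet> (x - z) + \<delta>) powr a"
    using infdist_frontier_le_inner[OF \<nu> x] A a \<delta>
    by (intro mult_left_mono powr_mono2) (auto simp: infdist_nonneg add_nonneg_pos)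
  finally have le: "- u x0 / (4 * (\<nu> \<bullet> (x0 - z))) * (\<nu> \<bullet> (x - z))
      \<le> - u x0 / 2 + A * (\<nu> \<bullet> (x - z) + \<delta>) powr a"
    using low by linarith
  show ?thesis unfolding a_def[symmetric]
    by (rule less_threshold_of_linear_le_sublinear[OF _ \<nu>(2)[OF x0(1)] D \<delta> A a \<nu>(2)[OF x] le])
      (use x0(2) in simp)
qed

lemma abs_le_height_bound:
  assumes \<delta>: "\<delta> > 0" and A: "A \<ge> 0"
    and bound: "\<And>x. x \<in> \<Omega> \<Longrightarrow> \<bar>u x\<bar> \<le> A * (infdist x (frontier \<Omega>) + \<delta>) powr ((2 + \<gamma>) / DIM('a))"
    and x0: "x0 \<in> \<Omega>"
  shows "\<bar>u x0\<bar> \<le> height_bound DIM('a) \<gamma> (height_const DIM('a) M R) A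
      * (infdist x0 (frontier \<Omega>) + \<delta>) powr ((2 + \<gamma>) / DIM('a))"
proof (cases "u x0 = 0")
  case True
  then show ?thesis using height_bound_nonneg[of "DIM('a)" \<gamma> "height_const DIM('a) M R" A] by simp
next
  case False
  then have h: "u x0 < 0" using nonpos[OF x0] by linarith
  define D where "D = infdist x0 (frontier \<Omega>) + \<delta>"
  define T where "T = max (4 * D) ((8 * D * A / - u x0) powr (1 / (1 - (2 + \<gamma>) / DIM('a))))"
  have D: "D > 0" using \<delta> by (simp add: D_def infdist_nonneg add_nonneg_pos)
  obtain z where z: "z \<in> frontier \<Omega>" "infdist x0 (frontier \<Omega>) = dist x0 z"
    using infdist_attains_inf[OF frontier_closed frontier_nonempty] by blast
  then have "z \<notin> \<Omega>" using not_in_frontier by blast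
  then obtain \<nu> where \<nu>: "norm \<nu> = 1" "\<And>y. y \<in> \<Omega> \<Longrightarrow> 0 < \<nu> \<bullet> (y - z)"
    using supporting_unit_normal[OF open_domain convex_domain] by blast
  have dp: "\<nu> \<bullet> (x0 - z) + \<delta> \<le> D"
    using norm_cauchy_schwarz[of \<nu> "x0 - z"] \<nu>(1) z(2) by (simp add: D_def dist_norm)
  have "(- u x0) ^ DIM('a) \<le> height_const DIM('a) M R * (\<nu> \<bullet> (x0 - z)) * T powr (1 + \<gamma>)"
    using height_pow_le[OF z(1) \<nu> x0 h] touching_point_in_slab[OF \<delta> A bound \<nu> x0 h dp] D
    by (simp add: T_def)
  also have "\<dots> \<le> height_const DIM('a) M R * D * T powr (1 + \<gamma>)"
    using M_pos R_pos dp \<delta> by (intro mult_right_mono mult_left_mono) (auto simp: height_const_def)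
  finally have "(- u x0) powr DIM('a) \<le> height_const DIM('a) M R * D * T powr (1 + \<gamma>)"
    using h by (simp add: powr_realpow)
  then have "- u x0 \<le> height_bound DIM('a) \<gamma> (height_const DIM('a) M R) A * D powr ((2 + \<gamma>) / DIM('a))"
    unfolding T_def using height_le_height_bound[OF \<gamma>_nonneg _ _ _ D A] \<gamma>_less M_pos R_pos h
    by (simp add: height_const_def)
  then show ?thesis using h by (simp add: D_def)
qed

lemma abs_le_offset:
  assumes C: "\<forall>A \<ge> 0. A \<le> height_bound DIM('a) \<gamma> (height_const DIM('a) M R) A \<longrightarrow> A \<le> C"
    and \<delta>: "\<delta> > 0" and x: "x \<in> \<Omega>"
  shows "\<bar>u x\<bar> \<le> C * (infdist x (frontier \<Omega>) + \<delta>) powr ((2 + \<gamma>) / DIM('a))"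
proof -
  define a where "a = (2 + \<gamma>) / DIM('a)"
  define w where "w y = (infdist y (frontier \<Omega>) + \<delta>) powr a" for y
  define A where "A = (SUP y\<in>\<Omega>. \<bar>u y\<bar> / w y)"
  have pos: "0 < infdist y (frontier \<Omega>) + \<delta>" for y using \<delta> infdist_nonneg[of y "frontier \<Omega>"] by linarith
  have w: "0 < w y" "\<delta> powr a \<le> w y" for y
    using pos[of y] \<delta> \<gamma>_nonneg infdist_nonneg[of y "frontier \<Omega>"] by (auto simp: w_def a_def intro!: powr_mono2)
  have "compact (u ` closure \<Omega>)"
    using bounded_domain by (intro compact_continuous_image continuous) (simp add: compact_eq_bounded_closed bounded_closure)
  then have "bounded (u ` closure \<Omega>)" by (rule compact_imp_bounded)
  then obtain B where B: "\<And>y. y \<in> closure \<Omega> \<Longrightarrow> \<bar>u y\<bar> \<le> B"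
    unfolding bounded_iff by auto
  \<comment> \<open>the offset \<open>\<delta>\<close> makes the weighted supremum \<open>A\<close> finite, so it can be bootstrapped\<close>
  have "\<bar>u y\<bar> / w y \<le> B / \<delta> powr a" if "y \<in> \<Omega>" for y
  proof -
    have "\<bar>u y\<bar> \<le> B" using B[of y] that closure_subset by blast
    then show ?thesis using w[of y] \<delta> by (intro frac_le) auto
  qed
  then have bdd: "bdd_above ((\<lambda>y. \<bar>u y\<bar> / w y) ` \<Omega>)" by (rule bdd_aboveI2)
  have bound: "\<bar>u y\<bar> \<le> A * w y" if "y \<in> \<Omega>" for y
    using cSUP_upper[OF that bdd] w(1)[of y] by (simp add: A_def divide_le_eq)
  have "0 \<le> A * w x" using bound[OF x] abs_ge_zero order_trans by blast
  then have A: "A \<ge> 0" using w(1)[of x] by (simp add: zero_le_mult_iff)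
  have "\<bar>u y\<bar> / w y \<le> height_bound DIM('a) \<gamma> (height_const DIM('a) M R) A"
    if "y \<in> \<Omega>" for y
  proof -
    have "\<bar>u y\<bar> \<le> height_bound DIM('a) \<gamma> (height_const DIM('a) M R) A * w y"
      using abs_le_height_bound[OF \<delta> A bound[unfolded w_def a_def] that] by (simp add: w_def a_def)
    then show ?thesis using w(1)[of y] by (simp add: divide_le_eq)
  qed
  then have "A \<le> height_bound DIM('a) \<gamma> (height_const DIM('a) M R) A"
    unfolding A_def using nonempty_domain by (intro cSUP_least) auto
  then have "A \<le> C" using C A by blast
  then have "\<bar>u x\<bar> \<le> C * w x"
    using bound[OF x] mult_right_mono[of A C "w x"] w(1)[of x] by linarith
  then show ?thesis by (simp add: w_def a_def)
qed

lemma abs_le: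
  assumes C: "\<forall>A \<ge> 0. A \<le> height_bound DIM('a) \<gamma> (height_const DIM('a) M R) A \<longrightarrow> A \<le> C"
    and x: "x \<in> \<Omega>"
  shows "\<bar>u x\<bar> \<le> C * infdist x (frontier \<Omega>) powr ((2 + \<gamma>) / DIM('a))"
proof (rule tendsto_lowerbound)
  have "infdist x (frontier \<Omega>) > 0"
    using x not_in_frontier frontier_nonempty by (simp add: infdist_pos_not_in_closed)
  then show "((\<lambda>\<delta>. C * (infdist x (frontier \<Omega>) + \<delta>) powr ((2 + \<gamma>) / DIM('a)))
      \<longlongrightarrow> C * infdist x (frontier \<Omega>) powr ((2 + \<gamma>) / DIM('a))) (at_right 0)"
    by (auto intro!: tendsto_eq_intros)
  show "\<forall>\<^sub>F \<delta> in at_right 0. \<bar>u x\<bar> \<le> C * (infdist x (frontier \<Omega>) + \<delta>) powr ((2 + \<gamma>) / DIM('a))"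
    using eventually_at_right_less[of 0] by (rule eventually_mono) (rule abs_le_offset[OF C _ x])
qed simp

end

theorem lemma4p3:
  fixes \<Omega> :: "'a::euclidean_space set" and M \<gamma> :: real
  assumes "DIM('a) \<ge> 3"
    and "open \<Omega>" and "connected \<Omega>" and "bounded \<Omega>" and "convex \<Omega>" and "\<Omega> \<noteq> {}"
    and "M > 0" and "0 \<le> \<gamma>" and "\<gamma> < real DIM('a) - 2"
  shows "\<exists>C. \<forall>u :: 'a \<Rightarrow> real.
           continuous_on (closure \<Omega>) u \<and> convex_on \<Omega> u \<and>
           (\<forall>x \<in> frontier \<Omega>. u x = 0) \<and>
           aleksandrov_det_le u \<Omega> (\<lambda>x. M * infdist x (frontier \<Omega>) powr \<gamma>)
           \<longrightarrow> (\<forall>x \<in> \<Omega>. \<bar>u x\<bar> \<le> C * infdist x (frontier \<Omega>) powr ((2 + \<gamma>) / real DIM('a)))"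
proof -
  obtain e where "\<forall>x\<in>closure \<Omega>. \<forall>y\<in>closure \<Omega>. dist x y \<le> e"
    using bounded_closure[OF \<open>bounded \<Omega>\<close>] bounded_two_points by blast
  then have diam: "\<And>x y. x \<in> closure \<Omega> \<Longrightarrow> y \<in> closure \<Omega> \<Longrightarrow> norm (x - y) < e + 1"
    by (fastforce simp: dist_norm)
  obtain C where C: "\<forall>A \<ge> 0. A \<le> height_bound DIM('a) \<gamma> (height_const DIM('a) M (e + 1)) A \<longrightarrow> A \<le> C"
    using height_bound_fixpoint[of \<gamma> "real DIM('a)"] assms(8,9) by auto
  show ?thesis
  proof (intro exI allI impI ballI)
    fix u :: "'a \<Rightarrow> real" and x
    assume "continuous_on (closure \<Omega>) u \<and> convex_on \<Omega> u \<and> (\<forall>x \<in> frontier \<Omega>. u x = 0) \<and>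
      aleksandrov_det_le u \<Omega> (\<lambda>x. M * infdist x (frontier \<Omega>) powr \<gamma>)" and "x \<in> \<Omega>"
    then interpret aleksandrov_subsolution \<Omega> u M \<gamma> "e + 1"
      using assms diam by unfold_locales auto
    show "\<bar>u x\<bar> \<le> C * infdist x (frontier \<Omega>) powr ((2 + \<gamma>) / real DIM('a))"
      by (rule abs_le[OF C \<open>x \<in> \<Omega>\<close>])
  qed
qed

end
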